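(* Let $G$ be a strongly connected network on $\mathcal{V}$ with stationary distribution $\pi$. For all $i,j,m\in\mathcal{V}$: (1) $\boldsymbol{F}_{iij}=\pi_iC_{ij}$; (2) $\dfrac{\boldsymbol{F}_{imj}}{\pi_m}+\dfrac{\boldsymbol{F}_{mij}}{\pi_i}=C_{ij}+C_{jm}-C_{im}$; (3) $\dfrac{\boldsymbol{F}_{imj}}{\pi_m}+\dfrac{\boldsymbol{F}_{ijm}}{\pi_j}=C_{jm}$; (4) $\boldsymbol{F}_{imj}+\boldsymbol{F}_{jmi}=\pi_mC_{ij}$.
   Context: The random walk on $G$ has transition matrix $P=D^{-1}A$ for a nonnegative affinity matrix $A$; strongly connected means all nodes mutually reachable. For target $t$ and $\mathcal{T}=\mathcal{V}\setminus\{t\}$, $F^{\{t\}}=(I-P_{\mathcal{T}\mathcal{T}})^{-1}$, and the fundamental tensor is $\boldsymbol{F}_{smt}=F^{\{t\}}_{sm}$ if $s,m\neq t$ and $0$ otherwise (so $\boldsymbol{F}_{imj}=F^{\{j\}}_{im}$). $H_i^{\{j\}}$ is the expected number of steps for the walk started at $i$ to first hit $j$ ($0$ if $i=j$), and the commute time is $C_{ij}=H_i^{\{j\}}+H_j^{\{i\}}$. *)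

theory Defs
  imports Complex_Main
begin

text \<open>Vertices are the elements of a finite type 'a (so the vertex set is UNIV).
  The network is given by a nonnegative affinity matrix A.\<close>

definition degree :: "('a::finite \<Rightarrow> 'a \<Rightarrow> real) \<Rightarrow> 'a \<Rightarrow> real" where
  "degree A i = (\<Sum>j\<in>UNIV. A i j)"

definition trans_mat :: "('a::finite \<Rightarrow> 'a \<Rightarrow> real) \<Rightarrow> 'a \<Rightarrow> 'a \<Rightarrow> real" where
  "trans_mat A i j = A i j / degree A i"

definition strongly_connected :: "('a \<Rightarrow> 'a \<Rightarrow> real) \<Rightarrow> bool" where
  "strongly_connected A \<longleftrightarrow> (\<forall>i j. (i, j) \<in> {(x, y). A x y > 0}\<^sup>*)"

definition stationary_distribution :: "('a::finite \<Rightarrow> 'a \<Rightarrow> real) \<Rightarrow> ('a \<Rightarrow> real) \<Rightarrow> bool" where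
  "stationary_distribution P \<pi> \<longleftrightarrow>
     (\<forall>i. \<pi> i \<ge> 0) \<and> (\<Sum>i\<in>UNIV. \<pi> i) = 1 \<and> (\<forall>j. (\<Sum>i\<in>UNIV. \<pi> i * P i j) = \<pi> j)"

text \<open>F^{t} = (I - P_TT)^{-1} with T = V - {t}, extended by zero outside T x T.\<close>
definition fund_mat :: "('a::finite \<Rightarrow> 'a \<Rightarrow> real) \<Rightarrow> 'a \<Rightarrow> 'a \<Rightarrow> 'a \<Rightarrow> real" where
  "fund_mat P t = (THE F.
     (\<forall>s\<in>-{t}. \<forall>m\<in>-{t}. (\<Sum>k\<in>-{t}. F s k * ((if k = m then 1 else 0) - P k m))
                          = (if s = m then 1 else 0)) \<and>
     (\<forall>s m. (s = t \<or> m = t) \<longrightarrow> F s m = 0))"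

definition fund_tensor :: "('a::finite \<Rightarrow> 'a \<Rightarrow> real) \<Rightarrow> 'a \<Rightarrow> 'a \<Rightarrow> 'a \<Rightarrow> real" where
  "fund_tensor P s m t = (if s \<noteq> t \<and> m \<noteq> t then fund_mat P t s m else 0)"

definition first_hit_prob :: "('a::finite \<Rightarrow> 'a \<Rightarrow> real) \<Rightarrow> 'a \<Rightarrow> 'a \<Rightarrow> nat \<Rightarrow> real" where
  "first_hit_prob P i j n =
     (\<Sum>xs\<in>{xs. length xs = Suc n \<and> xs ! 0 = i \<and> xs ! n = j \<and> (\<forall>k<n. xs ! k \<noteq> j)}.
        \<Prod>k<n. P (xs ! k) (xs ! Suc k))"

text \<open>Expected first hitting time H_i^{j} = E[T] = sum_n n * Pr(T = n) (0 if i = j).\<close>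
definition hitting_time :: "('a::finite \<Rightarrow> 'a \<Rightarrow> real) \<Rightarrow> 'a \<Rightarrow> 'a \<Rightarrow> real" where
  "hitting_time P i j = (\<Sum>n. real n * first_hit_prob P i j n)"

definition commute_time :: "('a::finite \<Rightarrow> 'a \<Rightarrow> real) \<Rightarrow> 'a \<Rightarrow> 'a \<Rightarrow> real" where
  "commute_time P i j = hitting_time P i j + hitting_time P j i"

end

theory Submission
  imports Defs
begin

text \<open>
  Write \<open>H(x, y)\<close> for the expected time to hit \<open>y\<close> from \<open>x\<close>. Everything follows from the
  closed form \<open>F\<^sup>t(s, m) = \<pi> m (H(s, t) + H(t, m) - H(s, m))\<close> of the fundamental matrix, after
  which (1)-(4) are linear identities between hitting times. The closed form is a right inverse
  of \<open>I - P\<^sub>T\<^sub>T\<close> by the first-step equation \<open>H(s, t) = 1 + \<Sum>\<^sub>l P s l H(l, t)\<close> and Kac's formula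
  \<open>\<pi> m (1 + \<Sum>\<^sub>l P m l H(l, m)) = 1\<close>; it is a left inverse by the maximum principle for
  functions that are harmonic off \<open>t\<close> and vanish at \<open>t\<close>. The first-step equation in turn comes
  from writing \<open>H\<close> as the series of survival probabilities, which decay geometrically because
  the chain is irreducible.
\<close>

lemma first_hit_prob_0: "first_hit_prob P i j 0 = (if i = j then 1 else 0)"
proof -
  have "{xs. length xs = Suc 0 \<and> xs ! 0 = i \<and> xs ! 0 = j} = (if i = j then {[i]} else {})"
    by (auto simp: length_Suc_conv)
  then show ?thesis
    by (simp add: first_hit_prob_def)
qed

lemma first_hit_prob_Suc:
  "first_hit_prob P i j (Suc n) =
     (if i = j then 0 else (\<Sum>k\<in>UNIV. P i k * first_hit_prob P k j n))"
proof (cases "i = j")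
  case True
  then have no_paths: "{xs. length xs = Suc (Suc n) \<and> xs ! 0 = i \<and> xs ! Suc n = j \<and>
               (\<forall>k<Suc n. xs ! k \<noteq> j)} = {}"
    by auto
  show ?thesis
    unfolding first_hit_prob_def no_paths using True by simp
next
  case False
  define U where "U = {ys. length ys = Suc n \<and> ys ! n = j \<and> (\<forall>k<n. ys ! k \<noteq> j)}"
  define w where "w ys = (\<Prod>k<n. P (ys ! k) (ys ! Suc k))" for ys
  have "finite U"
    by (rule finite_subset[OF _ finite_lists_length_eq[of UNIV "Suc n"]]) (auto simp: U_def)
  have paths: "{xs. length xs = Suc (Suc n) \<and> xs ! 0 = i \<and> xs ! Suc n = j \<and>
                 (\<forall>k<Suc n. xs ! k \<noteq> j)} = Cons i ` U"
  proof (intro set_eqI iffI)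
    fix xs
    assume "xs \<in> {xs. length xs = Suc (Suc n) \<and> xs ! 0 = i \<and> xs ! Suc n = j \<and>
                 (\<forall>k<Suc n. xs ! k \<noteq> j)}"
    then obtain ys where xs: "xs = i # ys"
      by (cases xs) auto
    with \<open>xs \<in> _\<close> have "ys \<in> U"
      by (auto simp: U_def)
    then show "xs \<in> Cons i ` U"
      using xs by simp
  next
    fix xs
    assume "xs \<in> Cons i ` U"
    then obtain ys where "ys \<in> U" "xs = i # ys" by auto
    moreover have "(i # ys) ! k \<noteq> j" if "k < Suc n" for k
      using that \<open>ys \<in> U\<close> False by (cases k) (auto simp: U_def)
    ultimately show "xs \<in> {xs. length xs = Suc (Suc n) \<and> xs ! 0 = i \<and> xs ! Suc n = j \<and>
                 (\<forall>k<Suc n. xs ! k \<noteq> j)}"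
      by (auto simp: U_def)
  qed
  have fibre: "{ys \<in> U. ys ! 0 = k} =
      {xs. length xs = Suc n \<and> xs ! 0 = k \<and> xs ! n = j \<and> (\<forall>k<n. xs ! k \<noteq> j)}" for k
    by (auto simp: U_def)
  have "first_hit_prob P i j (Suc n) = (\<Sum>ys\<in>U. \<Prod>k<Suc n. P ((i # ys) ! k) ((i # ys) ! Suc k))"
    unfolding first_hit_prob_def paths by (subst sum.reindex) auto
  also have "\<dots> = (\<Sum>ys\<in>U. P i (ys ! 0) * w ys)"
    by (simp only: prod.lessThan_Suc_shift nth_Cons_0 nth_Cons_Suc w_def)
  also have "\<dots> = (\<Sum>k\<in>UNIV. \<Sum>ys\<in>{ys \<in> U. ys ! 0 = k}. P i (ys ! 0) * w ys)"
    by (rule sum.group[symmetric]) (simp_all add: \<open>finite U\<close>)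
  also have "\<dots> = (\<Sum>k\<in>UNIV. \<Sum>ys\<in>{ys \<in> U. ys ! 0 = k}. P i k * w ys)"
    by (intro sum.cong) auto
  also have "\<dots> = (\<Sum>k\<in>UNIV. P i k * first_hit_prob P k j n)"
    by (simp only: first_hit_prob_def fibre w_def sum_distrib_left)
  finally show ?thesis
    using False by simp
qed

text \<open>
  \<open>survival_prob P i j n\<close> is the probability that the walk started at \<open>i\<close> has not visited \<open>j\<close>
  at any of the times \<open>0, \<dots>, n\<close>.
\<close>

fun survival_prob :: "('a::finite \<Rightarrow> 'a \<Rightarrow> real) \<Rightarrow> 'a \<Rightarrow> 'a \<Rightarrow> nat \<Rightarrow> real" where
  "survival_prob P i j 0 = (if i = j then 0 else 1)"
| "survival_prob P i j (Suc n) =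
     (if i = j then 0 else (\<Sum>l\<in>UNIV. P i l * survival_prob P l j n))"

lemma survival_prob_self [simp]: "survival_prob P j j n = 0"
  by (cases n) auto

lemma sum_mult_delta_right:
  "finite T \<Longrightarrow> m \<in> T \<Longrightarrow> (\<Sum>k\<in>T. f k * (if k = m then 1 else 0)) = (f m :: 'b::semiring_1)"
  by (simp add: if_distrib[of "(*) _"] cong: if_cong)

lemma sum_delta_mult_left:
  "finite T \<Longrightarrow> s \<in> T \<Longrightarrow> (\<Sum>k\<in>T. (if s = k then 1 else 0) * f k) = (f s :: 'b::semiring_1)"
  by (simp add: if_distrib[of "\<lambda>x. x * _"] cong: if_cong)

lemma sum_UNIV_remove:
  "(\<Sum>l\<in>UNIV. f l) = f j + (\<Sum>l\<in>-{j::'a::finite}. f l :: 'b::comm_monoid_add)"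
  by (simp add: sum.remove Compl_eq_Diff_UNIV)

locale markov_matrix =
  fixes P :: "'a::finite \<Rightarrow> 'a \<Rightarrow> real"
  assumes nonneg: "\<And>i j. 0 \<le> P i j"
    and row_sum: "\<And>i. (\<Sum>j\<in>UNIV. P i j) = 1"
begin

lemma survival_prob_nonneg: "0 \<le> survival_prob P i j n"
  and survival_prob_le_1: "survival_prob P i j n \<le> 1"
proof (induction n arbitrary: i)
  case (Suc n)
  {
    case 1
    show ?case
      using Suc nonneg by (simp add: sum_nonneg)
  next
    case 2
    have "(\<Sum>l\<in>UNIV. P i l * survival_prob P l j n) \<le> (\<Sum>l\<in>UNIV. P i l)"
      by (rule sum_mono) (use Suc nonneg in \<open>simp add: mult_left_le\<close>)
    then show ?case
      by (simp add: row_sum)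
  }
qed simp_all

lemma survival_prob_add_le:
  assumes bound: "\<And>l. survival_prob P l j n \<le> c"
  shows "survival_prob P i j (n + m) \<le> c * survival_prob P i j m"
proof (induction m arbitrary: i)
  case 0
  show ?case
    using bound[of i] by simp
next
  case (Suc m)
  show ?case
  proof (cases "i = j")
    case True
    then show ?thesis
      using bound[of j] by simp
  next
    case False
    have "(\<Sum>l\<in>UNIV. P i l * survival_prob P l j (n + m))
        \<le> (\<Sum>l\<in>UNIV. P i l * (c * survival_prob P l j m))"
      by (rule sum_mono) (use Suc nonneg in \<open>simp add: mult_left_mono\<close>)
    then show ?thesis
      using False by (simp add: sum_distrib_left mult_ac)
  qed
qed

lemma survival_prob_antimono:
  assumes "n \<le> n'"
  shows "survival_prob P i j n' \<le> survival_prob P i j n"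
proof (rule lift_Suc_antimono_le[OF _ assms])
  fix n
  have "survival_prob P i j (1 + n) \<le> 1 * survival_prob P i j n"
    by (rule survival_prob_add_le) (rule survival_prob_le_1)
  then show "survival_prob P i j (Suc n) \<le> survival_prob P i j n"
    by simp
qed

lemma first_hit_prob_Suc_eq_diff:
  "first_hit_prob P i j (Suc n) = survival_prob P i j n - survival_prob P i j (Suc n)"
proof (induction n arbitrary: i)
  case 0
  have "first_hit_prob P l j 0 + survival_prob P l j 0 = 1" for l
    by (simp add: first_hit_prob_0)
  then have "(\<Sum>l\<in>UNIV. P i l * first_hit_prob P l j 0) + (\<Sum>l\<in>UNIV. P i l * survival_prob P l j 0) = 1"
    by (simp only: sum.distrib[symmetric] distrib_left[symmetric] mult_1_right row_sum)
  then show ?case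
    by (simp add: first_hit_prob_Suc del: survival_prob.simps) (simp add: algebra_simps)
next
  case (Suc n)
  show ?case
    by (simp add: first_hit_prob_Suc[of P i j "Suc n"] Suc.IH right_diff_distrib sum_subtractf
        del: survival_prob.simps) (simp add: right_diff_distrib sum_subtractf)
qed

end

locale irreducible_markov_matrix = markov_matrix +
  assumes reachable: "\<And>i j. (i, j) \<in> {(x, y). P x y > 0}\<^sup>*"
begin

lemma survival_prob_eventually_lt_1: "\<exists>L. survival_prob P i j L < 1"
  using reachable[of i j]
proof (induction rule: converse_rtrancl_induct)
  case base
  show ?case
    by (rule exI[of _ 0]) simp
next
  case (step y z)
  then obtain L where L: "survival_prob P z j L < 1" and "P y z > 0"
    by auto
  show ?case
  proof (cases "y = j")
    case True
    then show ?thesis by simp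
  next
    case False
    have "(\<Sum>l\<in>UNIV. P y l * survival_prob P l j L) < (\<Sum>l\<in>UNIV. P y l)"
    proof (rule sum_strict_mono_ex1)
      show "\<forall>l\<in>UNIV. P y l * survival_prob P l j L \<le> P y l"
        using nonneg survival_prob_le_1 by (simp add: mult_left_le)
      show "\<exists>l\<in>UNIV. P y l * survival_prob P l j L < P y l"
        using \<open>P y z > 0\<close> L by (intro bexI[of _ z]) auto
    qed simp
    then have "survival_prob P y j (Suc L) < 1"
      using False by (simp add: row_sum)
    then show ?thesis by blast
  qed
qed

lemma survival_prob_geometric:
  "\<exists>C r. 0 < r \<and> r < 1 \<and> (\<forall>i n. survival_prob P i j n \<le> C * r ^ n)"
proof -
  have "\<forall>i. \<exists>L. survival_prob P i j L < 1"
    using survival_prob_eventually_lt_1 by blast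
  then obtain L where L: "\<And>i. survival_prob P i j (L i) < 1"
    by metis
  define N where "N = Suc (Max (range L))"
  have "0 < N" by (simp add: N_def)
  define \<rho> where "\<rho> = max (1/2) (Max (range (\<lambda>i. survival_prob P i j N)))"
  have "survival_prob P i j N < 1" for i
    using survival_prob_antimono[of "L i" N i j] L[of i] by (simp add: N_def le_SucI)
  then have "\<rho> < 1"
    by (simp add: \<rho>_def)
  have "0 < \<rho>"
    by (simp add: \<rho>_def)
  have block: "survival_prob P i j N \<le> \<rho>" for i
    unfolding \<rho>_def by (rule max.coboundedI2) simp
  have blocks: "survival_prob P i j (k * N) \<le> \<rho> ^ k" for k i
  proof (induction k arbitrary: i)
    case 0
    show ?case
      using survival_prob_le_1 by simp
  next
    case (Suc k)
    have "survival_prob P i j (k * N + N) \<le> \<rho> ^ k * survival_prob P i j N"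
      by (rule survival_prob_add_le) (rule Suc.IH)
    also have "\<dots> \<le> \<rho> ^ k * \<rho>"
      using block \<open>0 < \<rho>\<close> by (simp add: mult_left_mono)
    finally show ?case
      by (simp add: add.commute mult.commute)
  qed
  define r where "r = root N \<rho>"
  have "0 < r" "r < 1" "r ^ N = \<rho>"
    using \<open>0 < N\<close> \<open>0 < \<rho>\<close> \<open>\<rho> < 1\<close> by (simp_all add: r_def real_root_gt_zero)
  have "survival_prob P i j n \<le> (1 / \<rho>) * r ^ n" for i n
  proof -
    have "n mod N < N"
      using \<open>0 < N\<close> by simp
    then have "n \<le> N * (n div N) + N"
      using mult_div_mod_eq[of N n] by linarith
    then have "r ^ (N * (n div N)) * \<rho> \<le> r ^ n"
      using power_decreasing[of n "N * (n div N) + N" r] \<open>0 < r\<close> \<open>r < 1\<close>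
      by (simp add: power_add \<open>r ^ N = \<rho>\<close>)
    have "survival_prob P i j n \<le> survival_prob P i j ((n div N) * N)"
      by (rule survival_prob_antimono) (simp add: div_times_less_eq_dividend)
    also have "\<dots> \<le> \<rho> ^ (n div N)"
      by (rule blocks)
    also have "\<dots> = r ^ (N * (n div N))"
      by (simp add: power_mult \<open>r ^ N = \<rho>\<close>)
    also have "\<dots> \<le> (1 / \<rho>) * r ^ n"
      using \<open>r ^ (N * (n div N)) * \<rho> \<le> r ^ n\<close> \<open>0 < \<rho>\<close> by (simp add: field_simps)
    finally show ?thesis .
  qed
  then show ?thesis
    using \<open>0 < r\<close> \<open>r < 1\<close> by blast
qed

lemma summable_survival_prob: "summable (survival_prob P i j)"
proof -
  obtain C r where "0 < r" "r < 1" and bound: "\<And>i n. survival_prob P i j n \<le> C * r ^ n"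
    using survival_prob_geometric by blast
  show ?thesis
  proof (rule summable_comparison_test')
    show "summable (\<lambda>n. C * r ^ n)"
      using \<open>0 < r\<close> \<open>r < 1\<close> by (simp add: summable_geometric)
    show "norm (survival_prob P i j n) \<le> C * r ^ n" for n
      using bound[of i n] by (simp add: survival_prob_nonneg)
  qed
qed

lemma survival_prob_times_n_limit_0: "(\<lambda>n. real n * survival_prob P i j n) \<longlonglongrightarrow> 0"
proof -
  obtain C r where "0 < r" "r < 1" and bound: "\<And>i n. survival_prob P i j n \<le> C * r ^ n"
    using survival_prob_geometric by blast
  have "(\<lambda>n. C * (real n * r ^ n)) \<longlonglongrightarrow> C * 0"
    using \<open>0 < r\<close> \<open>r < 1\<close> by (intro tendsto_mult tendsto_const powser_times_n_limit_0) simp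
  then have upper: "(\<lambda>n. C * (real n * r ^ n)) \<longlonglongrightarrow> 0"
    by simp
  have "0 \<le> real n * survival_prob P i j n" for n
    by (simp add: survival_prob_nonneg)
  moreover have "real n * survival_prob P i j n \<le> C * (real n * r ^ n)" for n
    using mult_left_mono[OF bound[of i n], of "real n"] by (simp add: mult.left_commute)
  ultimately show ?thesis
    by (intro real_tendsto_sandwich[OF always_eventually always_eventually tendsto_const upper]) auto
qed

text \<open>Summation by parts: \<open>\<Sum>\<^sub>n n Pr(T = n) = \<Sum>\<^sub>n Pr(T > n)\<close>.\<close>

lemma hitting_time_eq_suminf_survival_prob:
  "hitting_time P i j = (\<Sum>n. survival_prob P i j n)"
proof -
  have partial: "(\<Sum>n<Suc M. real n * first_hit_prob P i j n)
      = (\<Sum>n<M. survival_prob P i j n) - real M * survival_prob P i j M" for M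
  proof (induction M)
    case (Suc M)
    then show ?case
      by (simp add: first_hit_prob_Suc_eq_diff del: survival_prob.simps) (simp add: algebra_simps)
  qed simp
  have "(\<lambda>M. (\<Sum>n<M. survival_prob P i j n) - real M * survival_prob P i j M)
      \<longlonglongrightarrow> (\<Sum>n. survival_prob P i j n) - 0"
    by (intro tendsto_diff summable_LIMSEQ summable_survival_prob survival_prob_times_n_limit_0)
  then have "(\<lambda>M. \<Sum>n<Suc M. real n * first_hit_prob P i j n) \<longlonglongrightarrow> (\<Sum>n. survival_prob P i j n)"
    by (simp only: partial diff_zero)
  then have "(\<lambda>n. real n * first_hit_prob P i j n) sums (\<Sum>n. survival_prob P i j n)"
    unfolding sums_def by (rule LIMSEQ_imp_Suc)
  then show ?thesis
    unfolding hitting_time_def by (rule sums_unique[symmetric])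
qed

lemma hitting_time_self [simp]: "hitting_time P j j = 0"
  by (simp add: hitting_time_eq_suminf_survival_prob)

lemma hitting_time_first_step:
  assumes "i \<noteq> j"
  shows "hitting_time P i j = 1 + (\<Sum>l\<in>UNIV. P i l * hitting_time P l j)"
proof -
  have "(\<Sum>n. survival_prob P i j n) = survival_prob P i j 0 + (\<Sum>n. survival_prob P i j (Suc n))"
    using suminf_split_head[OF summable_survival_prob[of i j]] by simp
  also have "(\<Sum>n. survival_prob P i j (Suc n)) = (\<Sum>n. \<Sum>l\<in>UNIV. P i l * survival_prob P l j n)"
    using assms by simp
  also have "\<dots> = (\<Sum>l\<in>UNIV. P i l * (\<Sum>n. survival_prob P l j n))"
    by (simp add: suminf_sum summable_mult summable_survival_prob suminf_mult)
  finally show ?thesis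
    using assms by (simp add: hitting_time_eq_suminf_survival_prob)
qed

text \<open>
  Maximum principle: at a maximum point the mean value property forces every successor to be a
  maximum point as well, and irreducibility propagates this to \<open>t\<close>.
\<close>

lemma harmonic_off_le_0:
  assumes zero: "v t = 0"
    and harmonic: "\<And>s. s \<noteq> t \<Longrightarrow> v s = (\<Sum>l\<in>UNIV. P s l * v l)"
  shows "v s \<le> 0"
proof (rule ccontr)
  assume "\<not> v s \<le> 0"
  define M where "M = Max (range v)"
  have le_M: "v l \<le> M" for l
    by (simp add: M_def)
  then have "M > 0"
    using \<open>\<not> v s \<le> 0\<close> by (meson le_less_trans not_le)
  obtain s0 where "v s0 = M"
    unfolding M_def by (metis Max_in finite_UNIV finite_imageI imageE image_is_empty UNIV_not_empty)
  have max_step: "v z = M" if "v y = M" "P y z > 0" for y z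
  proof -
    have "y \<noteq> t"
      using that zero \<open>M > 0\<close> by auto
    then have "M = (\<Sum>l\<in>UNIV. P y l * v l)"
      using harmonic[of y] that by simp
    then have "(\<Sum>l\<in>UNIV. P y l * (M - v l)) = 0"
      by (simp add: right_diff_distrib sum_subtractf sum_distrib_right[symmetric] row_sum mult.commute)
    then have "P y z * (M - v z) = 0"
      using sum_nonneg_eq_0_iff[of UNIV "\<lambda>l. P y l * (M - v l)"] nonneg le_M by simp
    then show ?thesis
      using that by simp
  qed
  have "v t = M"
    using reachable[of s0 t] by (induction rule: rtrancl_induct) (use \<open>v s0 = M\<close> max_step in auto)
  then show False
    using zero \<open>M > 0\<close> by simp
qed

end

locale stationary_markov_matrix = irreducible_markov_matrix P
  for P :: "'a::finite \<Rightarrow> 'a \<Rightarrow> real" +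
  fixes \<pi> :: "'a \<Rightarrow> real"
  assumes stationary_nonneg: "\<And>i. 0 \<le> \<pi> i"
    and stationary_sum: "(\<Sum>i\<in>UNIV. \<pi> i) = 1"
    and stationary: "\<And>j. (\<Sum>i\<in>UNIV. \<pi> i * P i j) = \<pi> j"
begin

lemma stationary_pos: "0 < \<pi> m"
proof (rule ccontr)
  assume "\<not> 0 < \<pi> m"
  then have "\<pi> m = 0"
    using stationary_nonneg[of m] by simp
  have zero_pred: "\<pi> y = 0" if "\<pi> z = 0" "P y z > 0" for y z
  proof -
    have "(\<Sum>i\<in>UNIV. \<pi> i * P i z) = 0"
      using stationary[of z] that by simp
    then have "\<pi> y * P y z = 0"
      using sum_nonneg_eq_0_iff[of UNIV "\<lambda>i. \<pi> i * P i z"] stationary_nonneg nonneg by simp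
    then show ?thesis
      using that by simp
  qed
  have "\<pi> k = 0" for k
    using reachable[of k m]
    by (induction rule: converse_rtrancl_induct) (use \<open>\<pi> m = 0\<close> zero_pred in auto)
  then show False
    using stationary_sum by simp
qed

text \<open>
  Kac's formula: the mean return time to \<open>m\<close> is \<open>1 / \<pi> m\<close>. Averaging the first-step equations
  against \<open>\<pi>\<close> makes all hitting times of \<open>m\<close> cancel by stationarity.
\<close>

lemma stationary_mult_return_time:
  "\<pi> m * (1 + (\<Sum>l\<in>UNIV. P m l * hitting_time P l m)) = 1"
proof -
  define R where "R = 1 + (\<Sum>l\<in>UNIV. P m l * hitting_time P l m)"
  have first_step: "hitting_time P k m + (if k = m then R else 0)
      = 1 + (\<Sum>l\<in>UNIV. P k l * hitting_time P l m)" for k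
    using hitting_time_first_step[of k m] by (cases "k = m") (auto simp: R_def)
  have "(\<Sum>k\<in>UNIV. \<pi> k * (\<Sum>l\<in>UNIV. P k l * hitting_time P l m))
      = (\<Sum>l\<in>UNIV. \<Sum>k\<in>UNIV. \<pi> k * P k l * hitting_time P l m)"
    by (subst sum.swap) (simp add: sum_distrib_left mult.assoc)
  also have "\<dots> = (\<Sum>l\<in>UNIV. (\<Sum>k\<in>UNIV. \<pi> k * P k l) * hitting_time P l m)"
    by (simp add: sum_distrib_right)
  also have "\<dots> = (\<Sum>l\<in>UNIV. \<pi> l * hitting_time P l m)"
    by (simp add: stationary)
  finally have "(\<Sum>k\<in>UNIV. \<pi> k * (hitting_time P k m + (if k = m then R else 0)))
      = 1 + (\<Sum>k\<in>UNIV. \<pi> k * hitting_time P k m)"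
    by (simp only: first_step distrib_left sum.distrib stationary_sum mult_1_right)
  then show ?thesis
    by (simp add: distrib_left sum.distrib if_distrib[of "(*) _"] R_def cong: if_cong)
qed

definition fund_mat_formula :: "'a \<Rightarrow> 'a \<Rightarrow> 'a \<Rightarrow> real" where
  "fund_mat_formula t s m = \<pi> m * (hitting_time P s t + hitting_time P t m - hitting_time P s m)"

definition id_minus_P :: "'a \<Rightarrow> 'a \<Rightarrow> real" where
  "id_minus_P a b = (if a = b then 1 else 0) - P a b"

lemma fund_mat_formula_target [simp]:
  "fund_mat_formula t t m = 0" "fund_mat_formula t s t = 0"
  by (simp_all add: fund_mat_formula_def)

lemma id_minus_P_mult_fund_mat_formula:
  assumes "s \<noteq> t" "m \<noteq> t"
  shows "(\<Sum>l\<in>-{t}. id_minus_P s l * fund_mat_formula t l m) = (if s = m then 1 else 0)"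
proof -
  have "(\<Sum>l\<in>-{t}. id_minus_P s l * fund_mat_formula t l m)
      = fund_mat_formula t s m - (\<Sum>l\<in>UNIV. P s l * fund_mat_formula t l m)"
    using sum_UNIV_remove[of "\<lambda>l. id_minus_P s l * fund_mat_formula t l m" t]
    by (simp add: id_minus_P_def left_diff_distrib sum_subtractf sum_delta_mult_left)
  also have "(\<Sum>l\<in>UNIV. P s l * fund_mat_formula t l m) = \<pi> m *
      ((\<Sum>l\<in>UNIV. P s l * hitting_time P l t) + hitting_time P t m
        - (\<Sum>l\<in>UNIV. P s l * hitting_time P l m))"
  proof -
    have "(\<Sum>l\<in>UNIV. P s l * fund_mat_formula t l m) = (\<Sum>l\<in>UNIV. \<pi> m *
        (P s l * hitting_time P l t + hitting_time P t m * P s l - P s l * hitting_time P l m))"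
      by (rule sum.cong) (simp_all add: fund_mat_formula_def algebra_simps)
    then show ?thesis
      by (simp only: sum_distrib_left[symmetric] sum_subtractf sum.distrib row_sum mult_1_right)
  qed
  also have "(\<Sum>l\<in>UNIV. P s l * hitting_time P l t) = hitting_time P s t - 1"
    using hitting_time_first_step[OF \<open>s \<noteq> t\<close>] by simp
  finally show ?thesis
    using hitting_time_first_step[of s m] stationary_mult_return_time[of m]
    by (cases "s = m") (simp_all add: fund_mat_formula_def algebra_simps)
qed

lemma fund_mat_formula_mult_id_minus_P:
  assumes "s \<noteq> t" "m \<noteq> t"
  shows "(\<Sum>k\<in>-{t}. fund_mat_formula t s k * id_minus_P k m) = (if s = m then 1 else 0)"
proof -
  \<comment> \<open>the defect of the left-inverse identity in column \<open>m\<close>; it is harmonic off \<open>t\<close> because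
    the formula is a right inverse, so the maximum principle forces it to vanish\<close>
  define v where "v l = (if l = t then 0
      else (\<Sum>k\<in>-{t}. fund_mat_formula t l k * id_minus_P k m) - (if l = m then 1 else 0))" for l
  have "v t = 0"
    by (simp add: v_def)
  have harmonic: "v x = (\<Sum>l\<in>UNIV. P x l * v l)" if "x \<noteq> t" for x
  proof -
    have "(\<Sum>l\<in>-{t}. id_minus_P x l * (\<Sum>k\<in>-{t}. fund_mat_formula t l k * id_minus_P k m))
        = (\<Sum>k\<in>-{t}. (\<Sum>l\<in>-{t}. id_minus_P x l * fund_mat_formula t l k) * id_minus_P k m)"
      by (simp only: sum_distrib_left sum_distrib_right mult.assoc) (rule sum.swap)
    also have "\<dots> = (\<Sum>k\<in>-{t}. (if x = k then 1 else 0) * id_minus_P k m)"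
      by (rule sum.cong) (use id_minus_P_mult_fund_mat_formula that in auto)
    also have "\<dots> = id_minus_P x m"
      using that by (simp add: sum_delta_mult_left)
    also have "\<dots> = (\<Sum>l\<in>-{t}. id_minus_P x l * (if l = m then 1 else 0))"
      using assms by (simp add: sum_mult_delta_right)
    finally have "(\<Sum>l\<in>-{t}. id_minus_P x l * v l) = 0"
      by (simp add: v_def right_diff_distrib sum_subtractf)
    moreover have "(\<Sum>l\<in>-{t}. id_minus_P x l * v l) = v x - (\<Sum>l\<in>UNIV. P x l * v l)"
      using sum_UNIV_remove[of "\<lambda>l. id_minus_P x l * v l" t] \<open>v t = 0\<close>
      by (simp add: id_minus_P_def left_diff_distrib sum_subtractf sum_delta_mult_left)
    ultimately show ?thesis
      by simp
  qed
  have "v s \<le> 0"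
    by (rule harmonic_off_le_0[of v t, OF \<open>v t = 0\<close> harmonic])
  moreover have "- v s \<le> 0"
    by (rule harmonic_off_le_0[of "\<lambda>l. - v l" t]) (simp_all add: \<open>v t = 0\<close> harmonic sum_negf)
  ultimately show ?thesis
    using assms by (simp add: v_def)
qed

lemma left_inverse_eq_fund_mat_formula:
  assumes inverse: "\<forall>s\<in>-{t}. \<forall>m\<in>-{t}.
      (\<Sum>k\<in>-{t}. F s k * ((if k = m then 1 else 0) - P k m)) = (if s = m then 1 else 0)"
    and zero: "\<forall>s m. (s = t \<or> m = t) \<longrightarrow> F s m = 0"
  shows "F = fund_mat_formula t"
proof (intro ext)
  fix s m
  show "F s m = fund_mat_formula t s m"
  proof (cases "s = t \<or> m = t")
    case True
    then show ?thesis
      using zero by auto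
  next
    case False
    have "F s m = (\<Sum>k\<in>-{t}. F s k * (if k = m then 1 else 0))"
      using False by (simp add: sum_mult_delta_right)
    also have "\<dots> = (\<Sum>k\<in>-{t}. F s k * (\<Sum>l\<in>-{t}. id_minus_P k l * fund_mat_formula t l m))"
      by (rule sum.cong) (use id_minus_P_mult_fund_mat_formula False in auto)
    also have "\<dots> = (\<Sum>l\<in>-{t}. (\<Sum>k\<in>-{t}. F s k * id_minus_P k l) * fund_mat_formula t l m)"
      by (simp only: sum_distrib_left sum_distrib_right mult.assoc) (rule sum.swap)
    also have "\<dots> = (\<Sum>l\<in>-{t}. (if s = l then 1 else 0) * fund_mat_formula t l m)"
      by (rule sum.cong) (use inverse False in \<open>auto simp: id_minus_P_def\<close>)
    also have "\<dots> = fund_mat_formula t s m"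
      using False by (simp add: sum_delta_mult_left)
    finally show ?thesis .
  qed
qed

lemma fund_mat_eq: "fund_mat P t = fund_mat_formula t"
  unfolding fund_mat_def
proof (rule the_equality)
  show "(\<forall>s\<in>-{t}. \<forall>m\<in>-{t}. (\<Sum>k\<in>-{t}. fund_mat_formula t s k * ((if k = m then 1 else 0) - P k m))
      = (if s = m then 1 else 0)) \<and> (\<forall>s m. s = t \<or> m = t \<longrightarrow> fund_mat_formula t s m = 0)"
    using fund_mat_formula_mult_id_minus_P by (auto simp: id_minus_P_def)
qed (use left_inverse_eq_fund_mat_formula in blast)

lemma fund_tensor_eq:
  "fund_tensor P i m j = \<pi> m * (hitting_time P i j + hitting_time P j m - hitting_time P i m)"
  by (auto simp: fund_tensor_def fund_mat_eq fund_mat_formula_def)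

end

lemma degree_pos:
  assumes nonneg: "\<forall>i j. A i j \<ge> 0"
    and sc: "strongly_connected A"
    and stat: "stationary_distribution (trans_mat A) \<pi>"
  shows "0 < degree A i"
proof (rule ccontr)
  assume "\<not> 0 < degree A i"
  moreover have "0 \<le> degree A i"
    unfolding degree_def by (rule sum_nonneg) (use nonneg in auto)
  ultimately have "degree A i = 0"
    by simp
  then have no_edge: "A i l = 0" for l
    using sum_nonneg_eq_0_iff[of UNIV "A i"] nonneg by (simp add: degree_def)
  have "l = i" for l
  proof -
    have "(i, l) \<in> {(x, y). A x y > 0}\<^sup>*"
      using sc by (simp add: strongly_connected_def)
    then show ?thesis
      by (rule converse_rtranclE) (use no_edge in auto)
  qed
  then have single: "(UNIV :: 'a set) = {i}"
    by auto
  have "trans_mat A i i = 0"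
    using \<open>degree A i = 0\<close> by (simp add: trans_mat_def)
  moreover have "(\<Sum>k\<in>UNIV. \<pi> k * trans_mat A k i) = \<pi> i" "(\<Sum>k\<in>UNIV. \<pi> k) = 1"
    using stat by (simp_all add: stationary_distribution_def)
  ultimately show False
    unfolding single by simp
qed

lemma stationary_markov_matrix_trans_mat:
  assumes nonneg: "\<forall>i j. A i j \<ge> 0"
    and sc: "strongly_connected A"
    and stat: "stationary_distribution (trans_mat A) \<pi>"
  shows "stationary_markov_matrix (trans_mat A) \<pi>"
proof
  note pos = degree_pos[OF assms]
  show "0 \<le> trans_mat A i j" for i j
    using nonneg pos[of i] by (simp add: trans_mat_def)
  show "(\<Sum>j\<in>UNIV. trans_mat A i j) = 1" for i
    using pos[of i] by (simp add: trans_mat_def sum_divide_distrib[symmetric] degree_def[symmetric])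
  have "trans_mat A x y > 0 \<longleftrightarrow> A x y > 0" for x y
    using pos[of x] by (simp add: trans_mat_def zero_less_divide_iff)
  then show "(i, j) \<in> {(x, y). trans_mat A x y > 0}\<^sup>*" for i j
    using sc by (simp add: strongly_connected_def)
qed (use stat in \<open>simp_all add: stationary_distribution_def\<close>)

theorem mainTheorem10:
  fixes A :: "'a::finite \<Rightarrow> 'a \<Rightarrow> real" and \<pi> :: "'a \<Rightarrow> real"
  assumes nonneg: "\<forall>i j. A i j \<ge> 0"
    and sc: "strongly_connected A"
    and stat: "stationary_distribution (trans_mat A) \<pi>"
  defines "P \<equiv> trans_mat A"
  shows "\<forall>i j m.
      fund_tensor P i i j = \<pi> i * commute_time P i j \<and>
      fund_tensor P i m j / \<pi> m + fund_tensor P m i j / \<pi> i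
        = commute_time P i j + commute_time P j m - commute_time P i m \<and>
      fund_tensor P i m j / \<pi> m + fund_tensor P i j m / \<pi> j = commute_time P j m \<and>
      fund_tensor P i m j + fund_tensor P j m i = \<pi> m * commute_time P i j"
proof (intro allI)
  fix i j m
  interpret stationary_markov_matrix P \<pi>
    unfolding P_def by (rule stationary_markov_matrix_trans_mat[OF assms(1-3)])
  have "\<pi> i \<noteq> 0" "\<pi> j \<noteq> 0" "\<pi> m \<noteq> 0"
    using stationary_pos by (metis less_irrefl)+
  then show "fund_tensor P i i j = \<pi> i * commute_time P i j \<and>
      fund_tensor P i m j / \<pi> m + fund_tensor P m i j / \<pi> i
        = commute_time P i j + commute_time P j m - commute_time P i m \<and>
      fund_tensor P i m j / \<pi> m + fund_tensor P i j m / \<pi> j = commute_time P j m \<and>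
      fund_tensor P i m j + fund_tensor P j m i = \<pi> m * commute_time P i j"
    by (simp add: fund_tensor_eq commute_time_def) (simp add: algebra_simps)
qed

end
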